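(* Let $K$ be a compact hypergroup and let $\sigma$ be a non-degenerate probability measure on $K$. Then every weak$^*$ cluster point $\sigma_0$ in $M(K)$ of the sequence $\left(\frac1n\sum_{k=1}^n\sigma^k\right)_{n\geq1}$ is the normalized Haar measure on $K$.
   Context: $K$ is a compact hypergroup (Jewett/Bloom–Heyer sense), assumed to have a left Haar measure; the normalized Haar measure is the Haar measure of total mass one. $M(K)=C(K)^*$ is the measure algebra and $\sigma^k$ the $k$-fold convolution power of $\sigma$. For subsets $A,B\subseteq K$, $A*B=\bigcup_{a\in A,b\in B}\operatorname{supp}(\delta_a*\delta_b)$ and $A^n$ is the $n$-fold product. A measure $\mu\in M(K)$ is non-degenerate if $K=\overline{\bigcup_{n\geq1}(\operatorname{supp}|\mu|)^n}$. *)

theory Defs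
  imports "HOL-Analysis.Analysis"
begin

text \<open>Measures on a compact Hausdorff space K (a type 'a with compact UNIV) are
  represented, as in the paper, as elements of M(K) = C(K)^*, i.e. as bounded linear
  functionals on the continuous real-valued functions on K.  Functionals are HOL functions
  of type ('a => real) => real; only their values on C(K) matter.\<close>

definition Cfun :: "('a::topological_space \<Rightarrow> real) set" where
  "Cfun = {f. continuous_on UNIV f}"

definition meas :: "(('a::topological_space \<Rightarrow> real) \<Rightarrow> real) \<Rightarrow> bool" where
  "meas L \<longleftrightarrow>
     (\<forall>f\<in>Cfun. \<forall>g\<in>Cfun. \<forall>a b. L (\<lambda>x. a * f x + b * g x) = a * L f + b * L g) \<and>
     (\<exists>B. \<forall>f\<in>Cfun. (\<forall>x. \<bar>f x\<bar> \<le> 1) \<longrightarrow> \<bar>L f\<bar> \<le> B)"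

definition positive_meas :: "(('a::topological_space \<Rightarrow> real) \<Rightarrow> real) \<Rightarrow> bool" where
  "positive_meas L \<longleftrightarrow> meas L \<and> (\<forall>f\<in>Cfun. (\<forall>x. 0 \<le> f x) \<longrightarrow> 0 \<le> L f)"

definition prob_meas :: "(('a::topological_space \<Rightarrow> real) \<Rightarrow> real) \<Rightarrow> bool" where
  "prob_meas L \<longleftrightarrow> positive_meas L \<and> L (\<lambda>_. 1) = 1"

text \<open>Support of a measure: complement of the largest open set on which it vanishes.\<close>
definition msupp :: "(('a::topological_space \<Rightarrow> real) \<Rightarrow> real) \<Rightarrow> 'a set" where
  "msupp L = {x. \<forall>U. open U \<and> x \<in> U \<longrightarrow>
                   (\<exists>f\<in>Cfun. (\<forall>y. y \<notin> U \<longrightarrow> f y = 0) \<and> L f \<noteq> 0)}"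

text \<open>Hypergroup structure given by the point-mass convolution
  pc x y = delta_x * delta_y, identity e and involution iv (Jewett's axioms,
  K compact Hausdorff).\<close>

definition hypergroup ::
  "('a::t2_space \<Rightarrow> 'a \<Rightarrow> (('a \<Rightarrow> real) \<Rightarrow> real)) \<Rightarrow> 'a \<Rightarrow> ('a \<Rightarrow> 'a) \<Rightarrow> bool" where
  "hypergroup pc e iv \<longleftrightarrow>
     compact (UNIV :: 'a set) \<and>
     (\<forall>x y. prob_meas (pc x y)) \<and>
     (\<forall>f\<in>Cfun. continuous_on UNIV (\<lambda>p. pc (fst p) (snd p) f)) \<and>
     (\<forall>U. open U \<longrightarrow> open {p. msupp (pc (fst p) (snd p)) \<subseteq> U}
                     \<and> open {p. msupp (pc (fst p) (snd p)) \<inter> U \<noteq> {}}) \<and>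
     (\<forall>f\<in>Cfun. \<forall>x y z. pc x y (\<lambda>u. pc u z f) = pc y z (\<lambda>v. pc x v f)) \<and>
     (\<forall>f\<in>Cfun. \<forall>x. pc e x f = f x \<and> pc x e f = f x) \<and>
     continuous_on UNIV iv \<and> (\<forall>x. iv (iv x) = x) \<and>
     (\<forall>f\<in>Cfun. \<forall>x y. pc x y (\<lambda>u. f (iv u)) = pc (iv y) (iv x) f) \<and>
     (\<forall>x y. e \<in> msupp (pc x (iv y)) \<longleftrightarrow> x = y)"

definition mconv ::
  "('a \<Rightarrow> 'a \<Rightarrow> (('a \<Rightarrow> real) \<Rightarrow> real)) \<Rightarrow> (('a \<Rightarrow> real) \<Rightarrow> real) \<Rightarrow> (('a \<Rightarrow> real) \<Rightarrow> real)
     \<Rightarrow> (('a \<Rightarrow> real) \<Rightarrow> real)" where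
  "mconv pc \<mu> \<nu> = (\<lambda>f. \<mu> (\<lambda>x. \<nu> (\<lambda>y. pc x y f)))"

text \<open>k-fold convolution power (used for k >= 1).\<close>
fun mpow ::
  "('a \<Rightarrow> 'a \<Rightarrow> (('a \<Rightarrow> real) \<Rightarrow> real)) \<Rightarrow> (('a \<Rightarrow> real) \<Rightarrow> real) \<Rightarrow> nat
     \<Rightarrow> (('a \<Rightarrow> real) \<Rightarrow> real)" where
  "mpow pc \<sigma> 0 = (\<lambda>f. 0)"
| "mpow pc \<sigma> (Suc 0) = \<sigma>"
| "mpow pc \<sigma> (Suc (Suc k)) = mconv pc (mpow pc \<sigma> (Suc k)) \<sigma>"

definition setprod :: "('a::topological_space \<Rightarrow> 'a \<Rightarrow> (('a \<Rightarrow> real) \<Rightarrow> real)) \<Rightarrow> 'a set \<Rightarrow> 'a set \<Rightarrow> 'a set" where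
  "setprod pc A B = (\<Union>a\<in>A. \<Union>b\<in>B. msupp (pc a b))"

fun setpow :: "('a::topological_space \<Rightarrow> 'a \<Rightarrow> (('a \<Rightarrow> real) \<Rightarrow> real)) \<Rightarrow> 'a set \<Rightarrow> nat \<Rightarrow> 'a set" where
  "setpow pc A 0 = {}"
| "setpow pc A (Suc 0) = A"
| "setpow pc A (Suc (Suc n)) = setprod pc (setpow pc A (Suc n)) A"

text \<open>Non-degenerate: K = closure of the union of (supp |sigma|)^n, n >= 1.
  For the probability measures considered here supp |sigma| = supp sigma.\<close>
definition nondegenerate ::
  "('a::topological_space \<Rightarrow> 'a \<Rightarrow> (('a \<Rightarrow> real) \<Rightarrow> real)) \<Rightarrow> (('a \<Rightarrow> real) \<Rightarrow> real) \<Rightarrow> bool" where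
  "nondegenerate pc \<sigma> \<longleftrightarrow> closure (\<Union>n\<in>{1..}. setpow pc (msupp \<sigma>) n) = UNIV"

definition left_haar ::
  "('a::topological_space \<Rightarrow> 'a \<Rightarrow> (('a \<Rightarrow> real) \<Rightarrow> real)) \<Rightarrow> (('a \<Rightarrow> real) \<Rightarrow> real) \<Rightarrow> bool" where
  "left_haar pc \<omega> \<longleftrightarrow> positive_meas \<omega> \<and> (\<exists>f\<in>Cfun. \<omega> f \<noteq> 0) \<and>
     (\<forall>x. \<forall>f\<in>Cfun. \<omega> (\<lambda>y. pc x y f) = \<omega> f)"

definition normalized_haar ::
  "('a::topological_space \<Rightarrow> 'a \<Rightarrow> (('a \<Rightarrow> real) \<Rightarrow> real)) \<Rightarrow> (('a \<Rightarrow> real) \<Rightarrow> real) \<Rightarrow> bool" where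
  "normalized_haar pc \<omega> \<longleftrightarrow> left_haar pc \<omega> \<and> \<omega> (\<lambda>_. 1) = 1"

definition weakstar_cluster ::
  "(nat \<Rightarrow> (('a::topological_space \<Rightarrow> real) \<Rightarrow> real)) \<Rightarrow> (('a \<Rightarrow> real) \<Rightarrow> real) \<Rightarrow> bool" where
  "weakstar_cluster s L \<longleftrightarrow> meas L \<and>
     (\<forall>F. finite F \<and> F \<subseteq> Cfun \<longrightarrow> (\<forall>\<epsilon>>0. \<forall>N. \<exists>n\<ge>N. n \<ge> 1 \<and>
        (\<forall>f\<in>F. \<bar>s n f - L f\<bar> < \<epsilon>)))"

end

theory Submission
  imports Defs
begin

text \<open>The Cesaro means s_n of the convolution powers of \<sigma> satisfy
  (\<sigma> * s_n)(f) - s_n(f) = (\<sigma>^(n+1)(f) - \<sigma>(f)) / n, so every weak* cluster point \<sigma>0 is a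
  probability measure with \<sigma> * \<sigma>0 = \<sigma>0.  For f in C(K) the function
  \<psi>(w) = \<sigma>0(\<delta>_w * f) then satisfies \<psi> = \<psi> * \<sigma>.  Let \<psi> attain its maximum M at x0.
  The closed set of all a with (\<delta>_x0 * \<delta>_a)(\<psi>) = M contains supp \<sigma> and absorbs supp \<sigma>
  from the right, because a probability measure integrating a function bounded by M to M
  sees only the value M on its support.  By non-degeneracy this set is all of K; taking
  a = x0^- and using e \<in> supp(\<delta>_x0 * \<delta>_x0^-) gives \<psi>(e) = M.  Hence
  \<sigma>0(\<delta>_x * f) \<le> \<sigma>0(f) for all x and f, and applying this to -f gives left invariance.
  Fubini's theorem for positive functionals, used throughout, follows from the
  Stone-Weierstrass theorem on K \<times> K.\<close>

section \<open>Positive functionals on \<open>C(K)\<close>\<close>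

lemma Cfun_iff: "f \<in> Cfun \<longleftrightarrow> continuous_on UNIV f"
  by (simp add: Cfun_def)

lemma Cfun_const [simp]: "(\<lambda>x. c) \<in> Cfun"
  by (simp add: Cfun_iff)

lemma positive_meas_linear:
  assumes "positive_meas \<mu>" "f \<in> Cfun" "g \<in> Cfun"
  shows "\<mu> (\<lambda>x. a * f x + b * g x) = a * \<mu> f + b * \<mu> g"
  using assms unfolding positive_meas_def meas_def by blast

lemma positive_meas_nonneg:
  assumes "positive_meas \<mu>" "f \<in> Cfun" "\<And>x. 0 \<le> f x"
  shows "0 \<le> \<mu> f"
  using assms unfolding positive_meas_def by blast

lemma positive_meas_add:
  assumes "positive_meas \<mu>" "f \<in> Cfun" "g \<in> Cfun"
  shows "\<mu> (\<lambda>x. f x + g x) = \<mu> f + \<mu> g"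
  using positive_meas_linear[OF assms, of 1 1] by simp

lemma positive_meas_diff:
  assumes "positive_meas \<mu>" "f \<in> Cfun" "g \<in> Cfun"
  shows "\<mu> (\<lambda>x. f x - g x) = \<mu> f - \<mu> g"
  using positive_meas_linear[OF assms, of 1 "-1"] by simp

lemma positive_meas_cmult:
  assumes "positive_meas \<mu>" "f \<in> Cfun"
  shows "\<mu> (\<lambda>x. c * f x) = c * \<mu> f"
  using positive_meas_linear[OF assms assms(2), of c 0] by simp

lemma positive_meas_multc:
  assumes "positive_meas \<mu>" "f \<in> Cfun"
  shows "\<mu> (\<lambda>x. f x * c) = \<mu> f * c"
  using positive_meas_cmult[OF assms, of c] by (simp add: mult.commute)

lemma positive_meas_minus:
  assumes "positive_meas \<mu>" "f \<in> Cfun"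
  shows "\<mu> (\<lambda>x. - f x) = - \<mu> f"
  using positive_meas_cmult[OF assms, of "-1"] by simp

lemma positive_meas_const:
  assumes "positive_meas \<mu>"
  shows "\<mu> (\<lambda>x. c) = c * \<mu> (\<lambda>x. 1)"
  using positive_meas_cmult[OF assms Cfun_const, of c 1] by simp

lemma positive_meas_mono:
  assumes "positive_meas \<mu>" "f \<in> Cfun" "g \<in> Cfun" "\<And>x. f x \<le> g x"
  shows "\<mu> f \<le> \<mu> g"
proof -
  have "(\<lambda>x. g x - f x) \<in> Cfun"
    using assms(2,3) by (auto simp: Cfun_iff intro!: continuous_intros)
  then have "0 \<le> \<mu> (\<lambda>x. g x - f x)"
    using positive_meas_nonneg[OF assms(1)] assms(4) by auto
  then show ?thesis
    using positive_meas_diff[OF assms(1,3,2)] by simp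
qed

lemma positive_meas_abs_le:
  assumes "positive_meas \<mu>" "f \<in> Cfun" "h \<in> Cfun" "\<And>x. \<bar>f x\<bar> \<le> h x"
  shows "\<bar>\<mu> f\<bar> \<le> \<mu> h"
proof -
  have "(\<lambda>x. - f x) \<in> Cfun"
    using assms(2) by (auto simp: Cfun_iff intro!: continuous_intros)
  moreover have "- f x \<le> h x" "f x \<le> h x" for x
    using assms(4)[of x] by linarith+
  ultimately have "\<mu> (\<lambda>x. - f x) \<le> \<mu> h" "\<mu> f \<le> \<mu> h"
    using positive_meas_mono[OF assms(1) _ assms(3)] assms(2) by blast+
  then show ?thesis
    using positive_meas_minus[OF assms(1,2)] by linarith
qed

lemma positive_meas_abs_diff_le:
  assumes "positive_meas \<mu>" "f \<in> Cfun" "g \<in> Cfun" "\<And>x. \<bar>f x - g x\<bar> \<le> c"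
  shows "\<bar>\<mu> f - \<mu> g\<bar> \<le> c * \<mu> (\<lambda>x. 1)"
proof -
  have "(\<lambda>x. f x - g x) \<in> Cfun"
    using assms(2,3) by (auto simp: Cfun_iff intro!: continuous_intros)
  then show ?thesis
    using positive_meas_abs_le[OF assms(1) _ Cfun_const, of "\<lambda>x. f x - g x" c] assms(4)
      positive_meas_diff[OF assms(1-3)] positive_meas_const[OF assms(1), of c] by simp
qed

lemma positive_measI:
  assumes linear: "\<And>f g a b. f \<in> Cfun \<Longrightarrow> g \<in> Cfun \<Longrightarrow>
      L (\<lambda>x. a * f x + b * g x) = a * L f + b * L g"
    and nonneg: "\<And>f. f \<in> Cfun \<Longrightarrow> (\<And>x. 0 \<le> f x) \<Longrightarrow> 0 \<le> L f"
  shows "positive_meas L"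
proof -
  have "\<bar>L f\<bar> \<le> L (\<lambda>x. 1)" if f: "f \<in> Cfun" and f1: "\<forall>x. \<bar>f x\<bar> \<le> 1" for f
  proof -
    have "0 \<le> L (\<lambda>x. 1 * 1 + a * f x)" if "\<bar>a\<bar> = 1" for a
    proof (rule nonneg)
      show "(\<lambda>x. 1 * 1 + a * f x) \<in> Cfun"
        using f by (auto simp: Cfun_iff intro!: continuous_intros)
      fix x
      have "\<bar>a * f x\<bar> \<le> 1"
        using that f1 by (simp add: abs_mult)
      then show "0 \<le> 1 * 1 + a * f x"
        by linarith
    qed
    from this[of 1] this[of "-1"] show ?thesis
      using linear[OF Cfun_const[of 1] f, of 1 1] linear[OF Cfun_const[of 1] f, of 1 "-1"]
      by (simp add: abs_le_iff)
  qed
  then show ?thesis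
    unfolding positive_meas_def meas_def using linear nonneg by blast
qed

lemma Cfun_bounded:
  fixes f :: "'a::topological_space \<Rightarrow> real"
  assumes "compact (UNIV :: 'a set)" "f \<in> Cfun"
  shows "\<exists>B. \<forall>x. \<bar>f x\<bar> \<le> B"
proof -
  have "compact (range f)"
    using compact_continuous_image[of UNIV f] assms unfolding Cfun_iff by blast
  then have "bounded (range f)"
    by (rule compact_imp_bounded)
  then show ?thesis
    by (auto simp: bounded_iff)
qed

lemma eq_if_abs_diff_small:
  fixes x y C :: real
  assumes "\<And>\<epsilon>. \<epsilon> > 0 \<Longrightarrow> \<bar>x - y\<bar> \<le> C * \<epsilon>"
  shows "x = y"
proof -
  have "\<bar>x - y\<bar> \<le> 0 + \<epsilon>" if "\<epsilon> > 0" for \<epsilon>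
  proof (cases "C > 0")
    case True
    then have "\<bar>x - y\<bar> \<le> C * (\<epsilon> / C)"
      using assms[of "\<epsilon> / C"] that by simp
    with True show ?thesis
      by simp
  next
    case False
    then have "C * 1 \<le> 0"
      by simp
    with assms[of 1] that show ?thesis
      by linarith
  qed
  then have "\<bar>x - y\<bar> \<le> 0"
    by (rule field_le_epsilon)
  then show ?thesis
    by simp
qed

section \<open>Fubini's theorem for positive functionals\<close>

lemma continuous_on_uniform_approx:
  fixes f :: "'a::topological_space \<Rightarrow> real"
  assumes "\<And>\<epsilon>. \<epsilon> > 0 \<Longrightarrow> \<exists>g. continuous_on S g \<and> (\<forall>x\<in>S. \<bar>f x - g x\<bar> \<le> \<epsilon>)"
  shows "continuous_on S f"
proof -
  have "\<forall>n. \<exists>g. continuous_on S g \<and> (\<forall>x\<in>S. \<bar>f x - g x\<bar> \<le> inverse (Suc n))"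
    using assms by simp
  then obtain g where g: "\<And>n. continuous_on S (g n)"
    "\<And>n x. x \<in> S \<Longrightarrow> \<bar>f x - g n x\<bar> \<le> inverse (Suc n)"
    by metis
  have "uniform_limit S g f sequentially"
    unfolding uniform_limit_iff
  proof (intro allI impI)
    fix \<epsilon> :: real
    assume "\<epsilon> > 0"
    then obtain N where N: "inverse (Suc N) < \<epsilon>"
      using reals_Archimedean by blast
    have "\<forall>x\<in>S. dist (g n x) (f x) < \<epsilon>" if "n \<ge> N" for n
    proof
      fix x
      assume "x \<in> S"
      have "inverse (real (Suc n)) \<le> inverse (Suc N)"
        using that by (simp add: field_simps)
      with g(2)[OF \<open>x \<in> S\<close>, of n] N have "\<bar>f x - g n x\<bar> < \<epsilon>"
        by linarith
      then show "dist (g n x) (f x) < \<epsilon>"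
        by (simp add: dist_real_def abs_minus_commute)
    qed
    then show "\<forall>\<^sub>F n in sequentially. \<forall>x\<in>S. dist (g n x) (f x) < \<epsilon>"
      unfolding eventually_sequentially by blast
  qed
  then show ?thesis
    by (rule uniform_limit_theorem[rotated]) (use g(1) in auto)
qed

lemma continuous_separates_points:
  assumes "compact (UNIV :: 'a::t2_space set)" "x \<noteq> y"
  shows "\<exists>f :: 'a \<Rightarrow> real. continuous_on UNIV f \<and> f x \<noteq> f y"
proof -
  have "Hausdorff_space (euclidean :: 'a topology)"
    unfolding Hausdorff_space_def by (simp add: separation_t2 disjnt_def)
  with assms(1) have "normal_space (euclidean :: 'a topology)"
    by (metis compact_Hausdorff_or_regular_imp_normal_space compact_space_def
        compactin_euclidean_iff topspace_euclidean)
  then obtain f where f: "continuous_map euclidean (top_of_set {0..1::real}) f"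
      "f ` {x} \<subseteq> {0}" "f ` {y} \<subseteq> {1}"
    using Urysohn_lemma[of euclidean "{x}" "{y}" 0 1] assms(2) by (auto simp: disjnt_def)
  then have "continuous_on UNIV f"
    by (metis continuous_map_in_subtopology continuous_map_iff_continuous2)
  with f show ?thesis
    by auto
qed

lemma Cfun_fst: "f \<in> Cfun \<Longrightarrow> continuous_on UNIV (\<lambda>p. f (fst p))"
  unfolding Cfun_iff by (rule continuous_on_compose2[of UNIV f]) (auto intro: continuous_intros)

lemma Cfun_snd: "f \<in> Cfun \<Longrightarrow> continuous_on UNIV (\<lambda>p. f (snd p))"
  unfolding Cfun_iff by (rule continuous_on_compose2[of UNIV f]) (auto intro: continuous_intros)

lemma Cfun_slice:
  assumes "continuous_on UNIV G"
  shows "(\<lambda>y. G (x, y)) \<in> Cfun" "(\<lambda>x. G (x, y)) \<in> Cfun"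
  unfolding Cfun_iff using assms
  by (auto intro!: continuous_on_compose2[of UNIV G] continuous_intros)

lemma continuous_on_swap:
  "continuous_on UNIV G \<Longrightarrow> continuous_on UNIV (\<lambda>p. G (snd p, fst p))"
  by (rule continuous_on_compose2[of UNIV G]) (auto intro!: continuous_intros)

inductive tensor_poly :: "('a::topological_space \<times> 'a \<Rightarrow> real) \<Rightarrow> bool" where
  tensor: "f \<in> Cfun \<Longrightarrow> g \<in> Cfun \<Longrightarrow> tensor_poly (\<lambda>p. f (fst p) * g (snd p))"
| add: "tensor_poly F \<Longrightarrow> tensor_poly G \<Longrightarrow> tensor_poly (\<lambda>p. F p + G p)"

lemma tensor_poly_const: "tensor_poly (\<lambda>p. c)"
  using tensor_poly.tensor[of "\<lambda>_. c" "\<lambda>_. 1"] by simp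

lemma continuous_on_tensor_poly: "tensor_poly F \<Longrightarrow> continuous_on UNIV F"
  by (induction rule: tensor_poly.induct) (auto intro!: continuous_intros Cfun_fst Cfun_snd)

lemma tensor_poly_swap: "tensor_poly F \<Longrightarrow> tensor_poly (\<lambda>p. F (snd p, fst p))"
proof (induction rule: tensor_poly.induct)
  case (tensor f g)
  then show ?case
    using tensor_poly.tensor[of g f] by (simp add: mult.commute)
next
  case (add F G)
  then show ?case
    by (simp add: tensor_poly.add)
qed

lemma tensor_poly_mult_tensor:
  assumes "tensor_poly F" "f \<in> Cfun" "g \<in> Cfun"
  shows "tensor_poly (\<lambda>p. f (fst p) * g (snd p) * F p)"
  using assms(1)
proof induction
  case (tensor f' g')
  have "(\<lambda>x. f x * f' x) \<in> Cfun" "(\<lambda>y. g y * g' y) \<in> Cfun"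
    using tensor assms(2,3) by (auto simp: Cfun_iff intro!: continuous_intros)
  from tensor_poly.tensor[OF this] show ?case
    by (simp add: ac_simps)
next
  case (add F G)
  then show ?case
    using tensor_poly.add[OF add.IH] by (simp add: distrib_left)
qed

lemma tensor_poly_mult:
  assumes "tensor_poly F" "tensor_poly G"
  shows "tensor_poly (\<lambda>p. F p * G p)"
  using assms(1)
proof induction
  case (tensor f g)
  then show ?case
    using tensor_poly_mult_tensor[OF assms(2)] by blast
next
  case (add F1 F2)
  then show ?case
    using tensor_poly.add[OF add.IH] by (simp add: distrib_right)
qed

lemma tensor_poly_separates:
  assumes "compact (UNIV :: 'a::t2_space set)" "(p :: 'a \<times> 'a) \<noteq> q"
  shows "\<exists>F. tensor_poly F \<and> F p \<noteq> F q"
proof (cases "fst p = fst q")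
  case True
  with assms(2) have "snd p \<noteq> snd q"
    by (metis prod.expand)
  then obtain f :: "'a \<Rightarrow> real" where "f \<in> Cfun" "f (snd p) \<noteq> f (snd q)"
    using continuous_separates_points[OF assms(1)] by (auto simp: Cfun_iff)
  moreover have "tensor_poly (\<lambda>r. f (snd r))"
    using tensor_poly.tensor[of "\<lambda>_. 1" f] \<open>f \<in> Cfun\<close> by simp
  ultimately show ?thesis
    by (intro exI[of _ "\<lambda>r. f (snd r)"]) simp
next
  case False
  then obtain f :: "'a \<Rightarrow> real" where "f \<in> Cfun" "f (fst p) \<noteq> f (fst q)"
    using continuous_separates_points[OF assms(1)] by (auto simp: Cfun_iff)
  moreover have "tensor_poly (\<lambda>r. f (fst r))"
    using tensor_poly.tensor[of f "\<lambda>_. 1"] \<open>f \<in> Cfun\<close> by simp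
  ultimately show ?thesis
    by (intro exI[of _ "\<lambda>r. f (fst r)"]) simp
qed

lemma tensor_poly_approx:
  assumes "compact (UNIV :: 'a::t2_space set)" "continuous_on UNIV (G :: 'a \<times> 'a \<Rightarrow> real)" "\<epsilon> > 0"
  shows "\<exists>F. tensor_poly F \<and> (\<forall>p. \<bar>G p - F p\<bar> < \<epsilon>)"
proof -
  have compact: "compact (UNIV :: ('a \<times> 'a) set)"
    using compact_Times[OF assms(1,1)] by simp
  have add: "tensor_poly (\<lambda>p. F p + H p)" if "tensor_poly F \<and> tensor_poly H" for F H
    using that tensor_poly.add[of F H] by simp
  have mult: "tensor_poly (\<lambda>p. F p * H p)" if "tensor_poly F \<and> tensor_poly H" for F H
    using that tensor_poly_mult[of F H] by simp
  have separates: "\<exists>F. tensor_poly F \<and> F p \<noteq> F q"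
    if "p \<in> UNIV \<and> q \<in> UNIV \<and> p \<noteq> q" for p q :: "'a \<times> 'a"
    using tensor_poly_separates[OF assms(1), of p q] that by simp
  show ?thesis
    using Stone_Weierstrass_HOL[where S = UNIV and P = tensor_poly and f = G and e = \<epsilon>, OF compact
        tensor_poly_const continuous_on_tensor_poly add mult separates assms(2,3)] by blast
qed

lemma tensor_poly_partial_Cfun:
  assumes "positive_meas \<nu>" "tensor_poly F"
  shows "(\<lambda>x. \<nu> (\<lambda>y. F (x, y))) \<in> Cfun"
  using assms(2)
proof induction
  case (tensor f g)
  then show ?case
    using positive_meas_cmult[OF assms(1) tensor(2)] by (simp add: Cfun_iff continuous_intros)
next
  case (add F G)
  then have "\<nu> (\<lambda>y. F (x, y) + G (x, y)) = \<nu> (\<lambda>y. F (x, y)) + \<nu> (\<lambda>y. G (x, y))" for x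
    using positive_meas_add[OF assms(1)] Cfun_slice(1) continuous_on_tensor_poly by blast
  then show ?case
    using add.IH by (simp add: Cfun_iff continuous_intros)
qed

lemma fubini_tensor_poly:
  assumes "positive_meas \<mu>" "positive_meas \<nu>" "tensor_poly F"
  shows "\<mu> (\<lambda>x. \<nu> (\<lambda>y. F (x, y))) = \<nu> (\<lambda>y. \<mu> (\<lambda>x. F (x, y)))"
  using assms(3)
proof induction
  case (tensor f g)
  then show ?case
    using positive_meas_cmult[OF assms(2) tensor(2)] positive_meas_multc[OF assms(1) tensor(1)]
    by simp
next
  case (add F G)
  note partial_F = tensor_poly_partial_Cfun[OF _ add.hyps(1)]
    and partial_G = tensor_poly_partial_Cfun[OF _ add.hyps(2)]
    and partial_F' = tensor_poly_partial_Cfun[OF _ tensor_poly_swap[OF add.hyps(1)]]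
    and partial_G' = tensor_poly_partial_Cfun[OF _ tensor_poly_swap[OF add.hyps(2)]]
  have \<nu>_add: "\<nu> (\<lambda>y. F (x, y) + G (x, y)) = \<nu> (\<lambda>y. F (x, y)) + \<nu> (\<lambda>y. G (x, y))" for x
    using positive_meas_add[OF assms(2)] Cfun_slice(1) continuous_on_tensor_poly add.hyps by blast
  have \<mu>_add: "\<mu> (\<lambda>x. F (x, y) + G (x, y)) = \<mu> (\<lambda>x. F (x, y)) + \<mu> (\<lambda>x. G (x, y))" for y
    using positive_meas_add[OF assms(1)] Cfun_slice(2) continuous_on_tensor_poly add.hyps by blast
  have "\<mu> (\<lambda>x. \<nu> (\<lambda>y. F (x, y) + G (x, y)))
      = \<mu> (\<lambda>x. \<nu> (\<lambda>y. F (x, y))) + \<mu> (\<lambda>x. \<nu> (\<lambda>y. G (x, y)))"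
    using positive_meas_add[OF assms(1) partial_F[OF assms(2)] partial_G[OF assms(2)]] \<nu>_add
    by simp
  also have "\<dots> = \<nu> (\<lambda>y. \<mu> (\<lambda>x. F (x, y))) + \<nu> (\<lambda>y. \<mu> (\<lambda>x. G (x, y)))"
    using add.IH by simp
  also have "\<dots> = \<nu> (\<lambda>y. \<mu> (\<lambda>x. F (x, y)) + \<mu> (\<lambda>x. G (x, y)))"
    using positive_meas_add[OF assms(2) partial_F'[OF assms(1)] partial_G'[OF assms(1)]] by simp
  also have "\<dots> = \<nu> (\<lambda>y. \<mu> (\<lambda>x. F (x, y) + G (x, y)))"
    using \<mu>_add by simp
  finally show ?case .
qed

lemma positive_meas_partial_Cfun:
  assumes "compact (UNIV :: 'a::t2_space set)" "positive_meas \<nu>"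
    and "continuous_on UNIV (G :: 'a \<times> 'a \<Rightarrow> real)"
  shows "(\<lambda>x. \<nu> (\<lambda>y. G (x, y))) \<in> Cfun"
  unfolding Cfun_iff
proof (rule continuous_on_uniform_approx)
  fix \<epsilon> :: real
  assume "\<epsilon> > 0"
  define c where "c = \<nu> (\<lambda>_. 1) + 1"
  have "c > 0"
    using positive_meas_nonneg[OF assms(2) Cfun_const, of 1] by (simp add: c_def)
  with \<open>\<epsilon> > 0\<close> obtain F where F: "tensor_poly F" "\<forall>p. \<bar>G p - F p\<bar> < \<epsilon> / c"
    using tensor_poly_approx[OF assms(1,3)] by (meson divide_pos_pos)
  have "\<bar>\<nu> (\<lambda>y. G (x, y)) - \<nu> (\<lambda>y. F (x, y))\<bar> \<le> \<epsilon>" for x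
  proof -
    have "\<bar>\<nu> (\<lambda>y. G (x, y)) - \<nu> (\<lambda>y. F (x, y))\<bar> \<le> \<epsilon> / c * \<nu> (\<lambda>_. 1)"
      by (rule positive_meas_abs_diff_le[OF assms(2) Cfun_slice(1)[OF assms(3)]
          Cfun_slice(1)[OF continuous_on_tensor_poly[OF F(1)]]])
        (use F(2) in \<open>auto intro: less_imp_le\<close>)
    also have "\<dots> \<le> \<epsilon> / c * c"
      using \<open>\<epsilon> > 0\<close> \<open>c > 0\<close> by (intro mult_left_mono) (auto simp: c_def)
    finally show ?thesis
      using \<open>c > 0\<close> by simp
  qed
  then show "\<exists>g. continuous_on UNIV g \<and> (\<forall>x\<in>UNIV. \<bar>\<nu> (\<lambda>y. G (x, y)) - g x\<bar> \<le> \<epsilon>)"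
    using tensor_poly_partial_Cfun[OF assms(2) F(1)] by (auto simp: Cfun_iff)
qed

lemma positive_meas_partial_Cfun':
  assumes "compact (UNIV :: 'a::t2_space set)" "positive_meas \<mu>"
    and "continuous_on UNIV (G :: 'a \<times> 'a \<Rightarrow> real)"
  shows "(\<lambda>y. \<mu> (\<lambda>x. G (x, y))) \<in> Cfun"
  using positive_meas_partial_Cfun[OF assms(1,2) continuous_on_swap[OF assms(3)]] by simp

lemma fubini_positive_meas:
  assumes "compact (UNIV :: 'a::t2_space set)" "positive_meas \<mu>" "positive_meas \<nu>"
    and "continuous_on UNIV (G :: 'a \<times> 'a \<Rightarrow> real)"
  shows "\<mu> (\<lambda>x. \<nu> (\<lambda>y. G (x, y))) = \<nu> (\<lambda>y. \<mu> (\<lambda>x. G (x, y)))"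
proof (rule eq_if_abs_diff_small)
  fix \<epsilon> :: real
  assume "\<epsilon> > 0"
  then obtain F where F: "tensor_poly F" "\<forall>p. \<bar>G p - F p\<bar> < \<epsilon>"
    using tensor_poly_approx[OF assms(1,4)] by blast
  have F_cont: "continuous_on UNIV F"
    using continuous_on_tensor_poly[OF F(1)] .
  have "\<bar>\<nu> (\<lambda>y. G (x, y)) - \<nu> (\<lambda>y. F (x, y))\<bar> \<le> \<epsilon> * \<nu> (\<lambda>_. 1)" for x
    using F(2) positive_meas_abs_diff_le[OF assms(3) Cfun_slice(1)[OF assms(4)] Cfun_slice(1)[OF F_cont]]
    by (simp add: less_imp_le)
  then have "\<bar>\<mu> (\<lambda>x. \<nu> (\<lambda>y. G (x, y))) - \<mu> (\<lambda>x. \<nu> (\<lambda>y. F (x, y)))\<bar>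
      \<le> \<epsilon> * \<nu> (\<lambda>_. 1) * \<mu> (\<lambda>_. 1)"
    using positive_meas_abs_diff_le[OF assms(2) positive_meas_partial_Cfun[OF assms(1,3,4)]
        positive_meas_partial_Cfun[OF assms(1,3) F_cont]] by blast
  moreover have "\<bar>\<mu> (\<lambda>x. G (x, y)) - \<mu> (\<lambda>x. F (x, y))\<bar> \<le> \<epsilon> * \<mu> (\<lambda>_. 1)" for y
    using F(2) positive_meas_abs_diff_le[OF assms(2) Cfun_slice(2)[OF assms(4)] Cfun_slice(2)[OF F_cont]]
    by (simp add: less_imp_le)
  then have "\<bar>\<nu> (\<lambda>y. \<mu> (\<lambda>x. G (x, y))) - \<nu> (\<lambda>y. \<mu> (\<lambda>x. F (x, y)))\<bar>
      \<le> \<epsilon> * \<mu> (\<lambda>_. 1) * \<nu> (\<lambda>_. 1)"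
    using positive_meas_abs_diff_le[OF assms(3) positive_meas_partial_Cfun'[OF assms(1,2,4)]
        positive_meas_partial_Cfun'[OF assms(1,2) F_cont]] by blast
  moreover have "\<mu> (\<lambda>x. \<nu> (\<lambda>y. F (x, y))) = \<nu> (\<lambda>y. \<mu> (\<lambda>x. F (x, y)))"
    using fubini_tensor_poly[OF assms(2,3) F(1)] .
  ultimately show "\<bar>\<mu> (\<lambda>x. \<nu> (\<lambda>y. G (x, y))) - \<nu> (\<lambda>y. \<mu> (\<lambda>x. G (x, y)))\<bar>
      \<le> 2 * \<mu> (\<lambda>_. 1) * \<nu> (\<lambda>_. 1) * \<epsilon>"
    by (simp add: abs_le_iff algebra_simps)
qed

section \<open>Supports and non-degeneracy\<close>

lemma prob_meas_eq_max_on_msupp: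
  fixes g :: "'a::topological_space \<Rightarrow> real"
  assumes "compact (UNIV :: 'a set)" "prob_meas \<mu>" "g \<in> Cfun" "\<And>x. g x \<le> M" "\<mu> g = M"
    and "z \<in> msupp \<mu>"
  shows "g z = M"
proof (rule ccontr)
  assume "g z \<noteq> M"
  with assms(4) have "g z < M"
    using order.not_eq_order_implies_strict by blast
  define \<delta> where "\<delta> = (M - g z) / 2"
  have "\<delta> > 0"
    using \<open>g z < M\<close> by (simp add: \<delta>_def)
  have "open {w. g w < M - \<delta>}"
    using assms(3) by (intro open_Collect_less) (auto simp: Cfun_iff intro!: continuous_intros)
  moreover have "g z < M - \<delta>"
    using \<open>g z < M\<close> by (simp add: \<delta>_def field_simps)
  ultimately obtain f where f: "f \<in> Cfun" "\<And>y. \<not> g y < M - \<delta> \<Longrightarrow> f y = 0" "\<mu> f \<noteq> 0"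
    using assms(6) unfolding msupp_def by blast
  obtain B where B: "\<And>x. \<bar>f x\<bar> \<le> B"
    using Cfun_bounded[OF assms(1) f(1)] by blast
  define c where "c = B / \<delta>"
  have dominated: "\<bar>f w\<bar> \<le> c * (M - g w)" for w
  proof (cases "g w < M - \<delta>")
    case True
    have "0 \<le> B"
      using B[of w] abs_ge_zero[of "f w"] by linarith
    then have "c * \<delta> \<le> c * (M - g w)"
      using True \<open>\<delta> > 0\<close> by (intro mult_left_mono) (auto simp: c_def)
    moreover have "c * \<delta> = B"
      using \<open>\<delta> > 0\<close> by (simp add: c_def)
    ultimately show ?thesis
      using B[of w] by linarith
  next
    case False
    then show ?thesis
      using f(2)[OF False] B[of w] assms(4)[of w] \<open>\<delta> > 0\<close> by (simp add: c_def)
  qed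
  have \<mu>: "positive_meas \<mu>" "\<mu> (\<lambda>_. 1) = 1"
    using assms(2) by (simp_all add: prob_meas_def)
  have "(\<lambda>w. M - g w) \<in> Cfun"
    using assms(3) by (auto simp: Cfun_iff intro!: continuous_intros)
  then have "\<mu> (\<lambda>w. c * (M - g w)) = 0"
    using positive_meas_cmult[OF \<mu>(1)] positive_meas_diff[OF \<mu>(1) Cfun_const assms(3)]
      positive_meas_const[OF \<mu>(1), of M] \<mu>(2) assms(5) by simp
  moreover have "(\<lambda>w. c * (M - g w)) \<in> Cfun"
    using assms(3) by (auto simp: Cfun_iff intro!: continuous_intros)
  ultimately have "\<bar>\<mu> f\<bar> \<le> 0"
    using positive_meas_abs_le[OF \<mu>(1) f(1) _ dominated] by simp
  with f(3) show False
    by simp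
qed

lemma setpow_Suc_subset:
  assumes "A \<subseteq> C" "\<And>a u. a \<in> C \<Longrightarrow> u \<in> A \<Longrightarrow> msupp (pc a u) \<subseteq> C"
  shows "setpow pc A (Suc n) \<subseteq> C"
proof (induction n)
  case 0
  then show ?case
    using assms(1) by simp
next
  case (Suc n)
  then show ?case
    using assms(2) by (auto simp: setprod_def)
qed

lemma nondegenerate_absorbing_eq_UNIV:
  assumes "nondegenerate pc \<sigma>" "closed C" "msupp \<sigma> \<subseteq> C"
    and "\<And>a u. a \<in> C \<Longrightarrow> u \<in> msupp \<sigma> \<Longrightarrow> msupp (pc a u) \<subseteq> C"
  shows "C = UNIV"
proof -
  have "setpow pc (msupp \<sigma>) n \<subseteq> C" if "n \<ge> 1" for n
    using setpow_Suc_subset[OF assms(3,4), where n = "n - 1"] that by simp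
  then have "closure (\<Union>n\<in>{1..}. setpow pc (msupp \<sigma>) n) \<subseteq> C"
    using assms(2) by (intro closure_minimal) auto
  then show ?thesis
    using assms(1) unfolding nondegenerate_def by blast
qed

section \<open>Weak* cluster points\<close>

lemma weakstar_clusterD:
  assumes "weakstar_cluster s L" "finite F" "F \<subseteq> Cfun" "\<epsilon> > 0"
  shows "\<exists>n\<ge>N. n \<ge> 1 \<and> (\<forall>f\<in>F. \<bar>s n f - L f\<bar> < \<epsilon>)"
  using assms unfolding weakstar_cluster_def by blast

lemma weakstar_cluster_prob_meas:
  assumes "weakstar_cluster s L" "\<And>n. n \<ge> 1 \<Longrightarrow> prob_meas (s n)"
  shows "prob_meas L"
proof -
  have "0 \<le> L f" if f: "f \<in> Cfun" "\<And>x. 0 \<le> f x" for f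
  proof (rule ccontr)
    assume "\<not> 0 \<le> L f"
    then obtain n where n: "n \<ge> 1" "\<bar>s n f - L f\<bar> < - L f"
      using weakstar_clusterD[OF assms(1), of "{f}" "- L f" 0] f(1) by auto
    have "0 \<le> s n f"
      using assms(2)[OF n(1)] f positive_meas_nonneg by (auto simp: prob_meas_def)
    with n(2) show False
      by (simp add: abs_less_iff)
  qed
  moreover have "L (\<lambda>_. 1) = 1"
  proof (rule eq_if_abs_diff_small)
    fix \<epsilon> :: real
    assume "\<epsilon> > 0"
    then obtain n where "n \<ge> 1" "\<bar>s n (\<lambda>_. 1) - L (\<lambda>_. 1)\<bar> < \<epsilon>"
      using weakstar_clusterD[OF assms(1), of "{\<lambda>_. 1}" \<epsilon> 0] by auto
    then show "\<bar>L (\<lambda>_. 1) - 1\<bar> \<le> 1 * \<epsilon>"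
      using assms(2) by (simp add: prob_meas_def abs_minus_commute)
  qed
  moreover have "meas L"
    using assms(1) by (simp add: weakstar_cluster_def)
  ultimately show ?thesis
    by (simp add: prob_meas_def positive_meas_def)
qed

lemma weakstar_cluster_eqI:
  assumes "weakstar_cluster s L" "f \<in> Cfun" "g \<in> Cfun"
    and "(\<lambda>n. s n g - s n f) \<longlonglongrightarrow> 0"
  shows "L g = L f"
proof (rule eq_if_abs_diff_small)
  fix \<epsilon> :: real
  assume "\<epsilon> > 0"
  with assms(4) obtain N where N: "\<And>n. n \<ge> N \<Longrightarrow> \<bar>s n g - s n f\<bar> < \<epsilon>"
    by (auto simp: LIMSEQ_iff)
  obtain n where "n \<ge> N" "\<bar>s n f - L f\<bar> < \<epsilon>" "\<bar>s n g - L g\<bar> < \<epsilon>"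
    using weakstar_clusterD[OF assms(1), of "{f, g}" \<epsilon> N] assms(2,3) \<open>\<epsilon> > 0\<close> by auto
  with N[of n] show "\<bar>L g - L f\<bar> \<le> 3 * \<epsilon>"
    by linarith
qed

section \<open>Convolution on a compact hypergroup\<close>

lemma mpow_Suc: "k \<ge> 1 \<Longrightarrow> mpow pc \<sigma> (Suc k) = mconv pc (mpow pc \<sigma> k) \<sigma>"
  by (cases k) auto

definition cesaro_mean ::
  "('a \<Rightarrow> 'a \<Rightarrow> (('a \<Rightarrow> real) \<Rightarrow> real)) \<Rightarrow> (('a \<Rightarrow> real) \<Rightarrow> real) \<Rightarrow> nat
     \<Rightarrow> (('a \<Rightarrow> real) \<Rightarrow> real)" where
  "cesaro_mean pc \<sigma> n f = 1 / real n * (\<Sum>k=1..n. mpow pc \<sigma> k f)"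

context
  fixes pc :: "'a::t2_space \<Rightarrow> 'a \<Rightarrow> (('a \<Rightarrow> real) \<Rightarrow> real)" and e :: 'a and iv :: "'a \<Rightarrow> 'a"
  assumes hypergroup: "hypergroup pc e iv"
begin

lemma compact_UNIV: "compact (UNIV :: 'a set)"
  using hypergroup by (simp add: hypergroup_def)

lemma prob_meas_pc: "prob_meas (pc x y)"
  using hypergroup by (simp add: hypergroup_def)

lemma positive_meas_pc: "positive_meas (pc x y)"
  using prob_meas_pc by (simp add: prob_meas_def)

lemma pc_one: "pc x y (\<lambda>_. 1) = 1"
  using prob_meas_pc by (simp add: prob_meas_def)

lemma continuous_on_pc: "f \<in> Cfun \<Longrightarrow> continuous_on UNIV (\<lambda>p. pc (fst p) (snd p) f)"
  using hypergroup by (simp add: hypergroup_def)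

lemma pc_assoc: "f \<in> Cfun \<Longrightarrow> pc x y (\<lambda>u. pc u z f) = pc y z (\<lambda>v. pc x v f)"
  using hypergroup by (simp add: hypergroup_def)

lemma pc_identity: "f \<in> Cfun \<Longrightarrow> pc e x f = f x"
  using hypergroup by (simp add: hypergroup_def)

lemma identity_in_msupp_pc_inverse: "e \<in> msupp (pc x (iv x))"
  using hypergroup by (simp add: hypergroup_def)

lemma pc_Cfun_right: "f \<in> Cfun \<Longrightarrow> (\<lambda>y. pc x y f) \<in> Cfun"
  using Cfun_slice(1)[OF continuous_on_pc, of f x] by simp

lemma pc_le: "f \<in> Cfun \<Longrightarrow> (\<And>z. f z \<le> M) \<Longrightarrow> pc x y f \<le> M"
  using positive_meas_mono[OF positive_meas_pc _ Cfun_const, of f M x y]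
    positive_meas_const[OF positive_meas_pc, of x y M] pc_one by simp

lemma pc_partial_Cfun: "positive_meas \<nu> \<Longrightarrow> f \<in> Cfun \<Longrightarrow> (\<lambda>x. \<nu> (\<lambda>y. pc x y f)) \<in> Cfun"
  using positive_meas_partial_Cfun[OF compact_UNIV _ continuous_on_pc, of \<nu> f] by simp

lemma pc_partial_Cfun': "positive_meas \<mu> \<Longrightarrow> f \<in> Cfun \<Longrightarrow> (\<lambda>y. \<mu> (\<lambda>x. pc x y f)) \<in> Cfun"
  using positive_meas_partial_Cfun'[OF compact_UNIV _ continuous_on_pc, of \<mu> f] by simp

lemma fubini_pc:
  "positive_meas \<mu> \<Longrightarrow> positive_meas \<nu> \<Longrightarrow> f \<in> Cfun \<Longrightarrow>
    \<mu> (\<lambda>x. \<nu> (\<lambda>y. pc x y f)) = \<nu> (\<lambda>y. \<mu> (\<lambda>x. pc x y f))"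
  using fubini_positive_meas[OF compact_UNIV _ _ continuous_on_pc, of \<mu> \<nu> f] by simp

lemma positive_meas_mconv:
  assumes "positive_meas \<mu>" "positive_meas \<nu>"
  shows "positive_meas (mconv pc \<mu> \<nu>)"
proof (rule positive_measI)
  fix f g :: "'a \<Rightarrow> real" and a b :: real
  assume f: "f \<in> Cfun" and g: "g \<in> Cfun"
  have "mconv pc \<mu> \<nu> (\<lambda>x. a * f x + b * g x) = \<mu> (\<lambda>x. \<nu> (\<lambda>y. a * pc x y f + b * pc x y g))"
    unfolding mconv_def using positive_meas_linear[OF positive_meas_pc f g] by simp
  also have "\<dots> = \<mu> (\<lambda>x. a * \<nu> (\<lambda>y. pc x y f) + b * \<nu> (\<lambda>y. pc x y g))"
    using positive_meas_linear[OF assms(2) pc_Cfun_right[OF f] pc_Cfun_right[OF g]] by simp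
  also have "\<dots> = a * mconv pc \<mu> \<nu> f + b * mconv pc \<mu> \<nu> g"
    unfolding mconv_def
    by (rule positive_meas_linear[OF assms(1) pc_partial_Cfun[OF assms(2) f]
          pc_partial_Cfun[OF assms(2) g]])
  finally show "mconv pc \<mu> \<nu> (\<lambda>x. a * f x + b * g x)
      = a * mconv pc \<mu> \<nu> f + b * mconv pc \<mu> \<nu> g" .
next
  fix f :: "'a \<Rightarrow> real"
  assume f: "f \<in> Cfun" and "\<And>x. 0 \<le> f x"
  then have "0 \<le> \<nu> (\<lambda>y. pc x y f)" for x
    using positive_meas_nonneg[OF assms(2) pc_Cfun_right[OF f]]
      positive_meas_nonneg[OF positive_meas_pc f] by simp
  then show "0 \<le> mconv pc \<mu> \<nu> f"
    unfolding mconv_def using positive_meas_nonneg[OF assms(1) pc_partial_Cfun[OF assms(2) f]] by simp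
qed

lemma mconv_one:
  assumes "positive_meas \<mu>"
  shows "mconv pc \<mu> \<nu> (\<lambda>_. 1) = \<mu> (\<lambda>_. 1) * \<nu> (\<lambda>_. 1)"
  unfolding mconv_def pc_one using positive_meas_const[OF assms, of "\<nu> (\<lambda>_. 1)"] by simp

lemma mconv_assoc:
  assumes "positive_meas \<nu>" "positive_meas \<rho>" "f \<in> Cfun"
  shows "mconv pc (mconv pc \<mu> \<nu>) \<rho> f = mconv pc \<mu> (mconv pc \<nu> \<rho>) f"
proof -
  have "pc x y (\<lambda>u. \<rho> (\<lambda>z. pc u z f)) = \<rho> (\<lambda>z. pc y z (\<lambda>v. pc x v f))" for x y
    using fubini_pc[OF positive_meas_pc assms(2,3), of x y] pc_assoc[OF assms(3)] by simp
  then show ?thesis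
    unfolding mconv_def by simp
qed

lemma prob_meas_mpow:
  assumes "prob_meas \<sigma>" "k \<ge> 1"
  shows "prob_meas (mpow pc \<sigma> k)"
  using assms(2)
proof (induction k rule: nat_induct_at_least)
  case base
  then show ?case
    using assms(1) by simp
next
  case (Suc k)
  have "prob_meas (mconv pc (mpow pc \<sigma> k) \<sigma>)"
    using Suc.IH assms(1) positive_meas_mconv mconv_one unfolding prob_meas_def by simp
  then show ?case
    by (simp only: mpow_Suc[OF Suc.hyps(1)])
qed

lemma mconv_mpow:
  assumes "prob_meas \<sigma>" "k \<ge> 1" "f \<in> Cfun"
  shows "mconv pc \<sigma> (mpow pc \<sigma> k) f = mpow pc \<sigma> (Suc k) f"
  using assms(2,3)
proof (induction k arbitrary: f rule: nat_induct_at_least)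
  case base
  then show ?case
    by simp
next
  case (Suc k)
  have \<sigma>: "positive_meas \<sigma>" and \<sigma>k: "positive_meas (mpow pc \<sigma> k)"
    using assms(1) prob_meas_mpow[OF assms(1) Suc.hyps(1)] by (simp_all add: prob_meas_def)
  have "mconv pc \<sigma> (mpow pc \<sigma> (Suc k)) f = mconv pc \<sigma> (mconv pc (mpow pc \<sigma> k) \<sigma>) f"
    by (simp only: mpow_Suc[OF Suc.hyps(1)])
  also have "\<dots> = mconv pc (mconv pc \<sigma> (mpow pc \<sigma> k)) \<sigma> f"
    by (rule mconv_assoc[OF \<sigma>k \<sigma> Suc.prems, symmetric])
  also have "\<dots> = mconv pc \<sigma> (mpow pc \<sigma> k) (\<lambda>x. \<sigma> (\<lambda>y. pc x y f))"
    by (simp add: mconv_def)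
  also have "\<dots> = mpow pc \<sigma> (Suc k) (\<lambda>x. \<sigma> (\<lambda>y. pc x y f))"
    using Suc.IH[OF pc_partial_Cfun[OF \<sigma> Suc.prems]] .
  also have "\<dots> = mpow pc \<sigma> (Suc (Suc k)) f"
    using mpow_Suc[of "Suc k" pc \<sigma>] by (simp add: mconv_def)
  finally show ?case .
qed

section \<open>Cesaro means of convolution powers\<close>

lemma prob_meas_cesaro_mean:
  assumes "prob_meas \<sigma>" "n \<ge> 1"
  shows "prob_meas (cesaro_mean pc \<sigma> n)"
proof -
  have \<sigma>k: "positive_meas (mpow pc \<sigma> k)" "mpow pc \<sigma> k (\<lambda>_. 1) = 1" if "k \<ge> 1" for k
    using prob_meas_mpow[OF assms(1) that] by (simp_all add: prob_meas_def)
  have "positive_meas (cesaro_mean pc \<sigma> n)"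
  proof (rule positive_measI)
    fix f g :: "'a \<Rightarrow> real" and a b :: real
    assume "f \<in> Cfun" "g \<in> Cfun"
    then have "mpow pc \<sigma> k (\<lambda>x. a * f x + b * g x) = a * mpow pc \<sigma> k f + b * mpow pc \<sigma> k g"
      if "k \<in> {1..n}" for k
      using positive_meas_linear[OF \<sigma>k(1)] that by simp
    then show "cesaro_mean pc \<sigma> n (\<lambda>x. a * f x + b * g x)
        = a * cesaro_mean pc \<sigma> n f + b * cesaro_mean pc \<sigma> n g"
      unfolding cesaro_mean_def by (simp add: sum.distrib sum_distrib_left algebra_simps)
  next
    fix f :: "'a \<Rightarrow> real"
    assume "f \<in> Cfun" "\<And>x. 0 \<le> f x"
    then show "0 \<le> cesaro_mean pc \<sigma> n f"
      unfolding cesaro_mean_def using positive_meas_nonneg[OF \<sigma>k(1)]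
      by (intro mult_nonneg_nonneg sum_nonneg) auto
  qed
  moreover have "cesaro_mean pc \<sigma> n (\<lambda>_. 1) = 1"
    using \<sigma>k(2) assms(2) by (simp add: cesaro_mean_def)
  ultimately show ?thesis
    by (simp add: prob_meas_def)
qed

lemma cesaro_mean_mconv_diff:
  assumes "prob_meas \<sigma>" "n \<ge> 1" "f \<in> Cfun"
  shows "cesaro_mean pc \<sigma> n (\<lambda>y. \<sigma> (\<lambda>x. pc x y f)) - cesaro_mean pc \<sigma> n f
    = (mpow pc \<sigma> (Suc n) f - mpow pc \<sigma> 1 f) / real n"
proof -
  have \<sigma>: "positive_meas \<sigma>"
    using assms(1) by (simp add: prob_meas_def)
  have "mpow pc \<sigma> k (\<lambda>y. \<sigma> (\<lambda>x. pc x y f)) = mpow pc \<sigma> (Suc k) f" if "k \<ge> 1" for k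
  proof -
    have "positive_meas (mpow pc \<sigma> k)"
      using prob_meas_mpow[OF assms(1) that] by (simp add: prob_meas_def)
    then have "mpow pc \<sigma> k (\<lambda>y. \<sigma> (\<lambda>x. pc x y f)) = mconv pc \<sigma> (mpow pc \<sigma> k) f"
      unfolding mconv_def using fubini_pc[OF \<sigma> _ assms(3)] by simp
    also have "\<dots> = mpow pc \<sigma> (Suc k) f"
      by (rule mconv_mpow[OF assms(1) that assms(3)])
    finally show ?thesis .
  qed
  then have "cesaro_mean pc \<sigma> n (\<lambda>y. \<sigma> (\<lambda>x. pc x y f)) - cesaro_mean pc \<sigma> n f
      = 1 / real n * (\<Sum>k=1..n. mpow pc \<sigma> (Suc k) f - mpow pc \<sigma> k f)"
    unfolding cesaro_mean_def by (simp add: sum_subtractf right_diff_distrib)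
  also have "(\<Sum>k=1..n. mpow pc \<sigma> (Suc k) f - mpow pc \<sigma> k f) = mpow pc \<sigma> (Suc n) f - mpow pc \<sigma> 1 f"
    by (rule sum_Suc_diff) (use assms(2) in simp)
  finally show ?thesis
    by simp
qed

theorem cesaro_cluster_mconv_invariant:
  assumes "prob_meas \<sigma>" "weakstar_cluster (cesaro_mean pc \<sigma>) \<sigma>0" "f \<in> Cfun"
  shows "mconv pc \<sigma> \<sigma>0 f = \<sigma>0 f"
proof -
  have \<sigma>: "positive_meas \<sigma>"
    using assms(1) by (simp add: prob_meas_def)
  have \<sigma>0: "positive_meas \<sigma>0"
    using weakstar_cluster_prob_meas[OF assms(2) prob_meas_cesaro_mean[OF assms(1)]]
    by (simp add: prob_meas_def)
  obtain B where B: "\<And>x. \<bar>f x\<bar> \<le> B"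
    using Cfun_bounded[OF compact_UNIV assms(3)] by blast
  have mpow_bound: "\<bar>mpow pc \<sigma> k f\<bar> \<le> B" if "k \<ge> 1" for k
  proof -
    have pos: "positive_meas (mpow pc \<sigma> k)" and "mpow pc \<sigma> k (\<lambda>_. 1) = 1"
      using prob_meas_mpow[OF assms(1) that] by (simp_all add: prob_meas_def)
    then show ?thesis
      using positive_meas_abs_le[OF pos assms(3) Cfun_const B] positive_meas_const[OF pos, of B] by simp
  qed
  have "norm (cesaro_mean pc \<sigma> n (\<lambda>y. \<sigma> (\<lambda>x. pc x y f)) - cesaro_mean pc \<sigma> n f) \<le> 2 * B / real n"
    if "n \<ge> 1" for n
  proof -
    have "\<bar>mpow pc \<sigma> (Suc n) f - mpow pc \<sigma> 1 f\<bar> \<le> 2 * B"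
      using abs_triangle_ineq4[of "mpow pc \<sigma> (Suc n) f" "mpow pc \<sigma> 1 f"] mpow_bound[of "Suc n"]
        mpow_bound[of 1] by linarith
    then show ?thesis
      unfolding cesaro_mean_mconv_diff[OF assms(1) that assms(3)] real_norm_def abs_divide
      using that by (simp add: divide_right_mono)
  qed
  then have "(\<lambda>n. cesaro_mean pc \<sigma> n (\<lambda>y. \<sigma> (\<lambda>x. pc x y f)) - cesaro_mean pc \<sigma> n f) \<longlonglongrightarrow> 0"
    by (intro Lim_null_comparison[OF _ lim_const_over_n[of "2 * B"]] eventually_sequentiallyI[of 1])
  then have "\<sigma>0 (\<lambda>y. \<sigma> (\<lambda>x. pc x y f)) = \<sigma>0 f"
    using weakstar_cluster_eqI[OF assms(2) assms(3) pc_partial_Cfun'[OF \<sigma> assms(3)]] by blast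
  then show ?thesis
    unfolding mconv_def using fubini_pc[OF \<sigma> \<sigma>0 assms(3)] by simp
qed

section \<open>A maximum principle and the Haar measure\<close>

lemma harmonic_pc:
  assumes "positive_meas \<sigma>" "\<psi> \<in> Cfun" "\<And>w. \<psi> w = \<sigma> (\<lambda>u. pc w u \<psi>)"
  shows "pc x a \<psi> = \<sigma> (\<lambda>u. pc a u (\<lambda>b. pc x b \<psi>))"
proof -
  have "pc x a \<psi> = pc x a (\<lambda>w. \<sigma> (\<lambda>u. pc w u \<psi>))"
    using assms(3) by (intro arg_cong[where f = "pc x a"] ext)
  also have "\<dots> = \<sigma> (\<lambda>u. pc x a (\<lambda>w. pc w u \<psi>))"
    by (rule fubini_pc[OF positive_meas_pc assms(1,2)])
  also have "\<dots> = \<sigma> (\<lambda>u. pc a u (\<lambda>b. pc x b \<psi>))"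
    using pc_assoc[OF assms(2)] by simp
  finally show ?thesis .
qed

lemma harmonic_le_identity:
  assumes "prob_meas \<sigma>" "nondegenerate pc \<sigma>" "\<psi> \<in> Cfun"
    and harmonic: "\<And>w. \<psi> w = \<sigma> (\<lambda>u. pc w u \<psi>)"
  shows "\<psi> x \<le> \<psi> e"
proof -
  have \<sigma>: "positive_meas \<sigma>"
    using assms(1) by (simp add: prob_meas_def)
  note max_on_msupp = prob_meas_eq_max_on_msupp[OF compact_UNIV]
  obtain x0 where x0: "\<And>y. \<psi> y \<le> \<psi> x0"
    using continuous_attains_sup[OF compact_UNIV UNIV_not_empty, of \<psi>] assms(3)
    by (auto simp: Cfun_iff)
  define h where "h = (\<lambda>a. pc x0 a \<psi>)"
  have h: "h \<in> Cfun" "\<And>a. h a \<le> \<psi> x0"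
    unfolding h_def using pc_Cfun_right[OF assms(3)] pc_le[OF assms(3) x0]
    by auto
  define C where "C = {a. h a = \<psi> x0}"
  have "C = UNIV"
  proof (rule nondegenerate_absorbing_eq_UNIV[OF assms(2)])
    show "closed C"
      unfolding C_def using h(1) by (intro closed_Collect_eq) (auto simp: Cfun_iff)
    have "\<sigma> h = \<psi> x0"
      unfolding h_def by (rule harmonic[symmetric])
    then show "msupp \<sigma> \<subseteq> C"
      unfolding C_def using max_on_msupp[OF assms(1) h] by auto
    show "msupp (pc a u) \<subseteq> C" if "a \<in> C" "u \<in> msupp \<sigma>" for a u
    proof -
      have "\<sigma> (\<lambda>u. pc a u h) = \<psi> x0"
        using harmonic_pc[OF \<sigma> assms(3) harmonic, of x0 a] \<open>a \<in> C\<close> by (simp add: C_def h_def)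
      then have "pc a u h = \<psi> x0"
        using max_on_msupp[OF assms(1) pc_Cfun_right[OF h(1)] pc_le[OF h]] \<open>u \<in> msupp \<sigma>\<close>
        by metis
      then show ?thesis
        unfolding C_def using max_on_msupp[OF prob_meas_pc h] by auto
    qed
  qed
  then have "pc x0 (iv x0) \<psi> = \<psi> x0"
    by (auto simp: C_def h_def)
  then have "\<psi> e = \<psi> x0"
    using max_on_msupp[OF prob_meas_pc assms(3) x0 _ identity_in_msupp_pc_inverse] by simp
  then show ?thesis
    using x0[of x] by simp
qed

theorem mconv_invariant_normalized_haar:
  assumes "prob_meas \<sigma>" "nondegenerate pc \<sigma>" "prob_meas \<sigma>0"
    and invariant: "\<And>f. f \<in> Cfun \<Longrightarrow> mconv pc \<sigma> \<sigma>0 f = \<sigma>0 f"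
  shows "normalized_haar pc \<sigma>0"
proof -
  have \<sigma>0: "positive_meas \<sigma>0" "\<sigma>0 (\<lambda>_. 1) = 1"
    using assms(3) by (simp_all add: prob_meas_def)
  have le: "\<sigma>0 (\<lambda>y. pc x y f) \<le> \<sigma>0 f" if f: "f \<in> Cfun" for f x
  proof -
    define \<psi> where "\<psi> w = \<sigma>0 (\<lambda>y. pc w y f)" for w
    have "\<psi> w = \<sigma> (\<lambda>u. pc w u \<psi>)" for w
    proof -
      have "\<psi> w = \<sigma> (\<lambda>u. \<sigma>0 (\<lambda>y. pc u y (\<lambda>v. pc w v f)))"
        using invariant[OF pc_Cfun_right[OF f, of w]] by (simp add: \<psi>_def mconv_def)
      also have "\<dots> = \<sigma> (\<lambda>u. \<sigma>0 (\<lambda>y. pc w u (\<lambda>v. pc v y f)))"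
        using pc_assoc[OF f] by simp
      also have "\<dots> = \<sigma> (\<lambda>u. pc w u \<psi>)"
        unfolding \<psi>_def using fubini_pc[OF positive_meas_pc \<sigma>0(1) f] by simp
      finally show ?thesis .
    qed
    then have "\<psi> x \<le> \<psi> e"
      using harmonic_le_identity[OF assms(1,2)] pc_partial_Cfun[OF \<sigma>0(1) f]
      unfolding \<psi>_def by blast
    then show ?thesis
      using pc_identity[OF f] by (simp add: \<psi>_def)
  qed
  have "\<sigma>0 (\<lambda>y. pc x y f) = \<sigma>0 f" if f: "f \<in> Cfun" for f x
  proof -
    have "(\<lambda>z. - f z) \<in> Cfun"
      using f by (auto simp: Cfun_iff intro!: continuous_intros)
    then have "\<sigma>0 (\<lambda>y. pc x y (\<lambda>z. - f z)) \<le> \<sigma>0 (\<lambda>z. - f z)"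
      by (rule le)
    moreover have "\<sigma>0 (\<lambda>y. pc x y (\<lambda>z. - f z)) = - \<sigma>0 (\<lambda>y. pc x y f)"
      using positive_meas_minus[OF positive_meas_pc f]
        positive_meas_minus[OF \<sigma>0(1) pc_Cfun_right[OF f]] by simp
    ultimately show ?thesis
      using le[OF f, of x] positive_meas_minus[OF \<sigma>0(1) f] by simp
  qed
  then show ?thesis
    unfolding normalized_haar_def left_haar_def using \<sigma>0 by (auto intro!: bexI[of _ "\<lambda>_. 1"])
qed

end

theorem corollary4p13:
  fixes pc :: "'a::t2_space \<Rightarrow> 'a \<Rightarrow> (('a \<Rightarrow> real) \<Rightarrow> real)"
    and e :: 'a and iv :: "'a \<Rightarrow> 'a"
    and \<sigma> \<sigma>0 :: "('a \<Rightarrow> real) \<Rightarrow> real"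
  assumes "hypergroup pc e iv"
    and "\<exists>\<omega>. left_haar pc \<omega>"
    and "prob_meas \<sigma>"
    and "nondegenerate pc \<sigma>"
    and "weakstar_cluster (\<lambda>n. \<lambda>f. (1 / real n) * (\<Sum>k=1..n. mpow pc \<sigma> k f)) \<sigma>0"
  shows "normalized_haar pc \<sigma>0"
proof -
  \<comment> \<open>The existence of a Haar measure is not assumed: the argument produces one.\<close>
  have cluster: "weakstar_cluster (cesaro_mean pc \<sigma>) \<sigma>0"
    using assms(5) unfolding cesaro_mean_def[abs_def] .
  have "prob_meas \<sigma>0"
    using weakstar_cluster_prob_meas[OF cluster prob_meas_cesaro_mean[OF assms(1,3)]] .
  moreover have "mconv pc \<sigma> \<sigma>0 f = \<sigma>0 f" if "f \<in> Cfun" for f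
    using cesaro_cluster_mconv_invariant[OF assms(1,3) cluster that] .
  ultimately show ?thesis
    using mconv_invariant_normalized_haar[OF assms(1,3,4)] by blast
qed

end
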